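(* For all integers $n\ge 2$ and $0\le m\le n(n-1)$, the algebraic connectivity of $\mathbb G(n,m)$ equals $\lfloor \frac{m}{n-1}\rfloor$.
   Context: For integers $n\ge2$ and $0\le m\le n(n-1)$, $\mathbb G(n,m)$ is the simple directed graph on vertex set $\{1,\dots,n\}$ whose arc set is $\{(\lceil \frac{i}{n-1}\rceil,\ n-((i-1)\bmod n)) : i=1,\dots,m\}$, where an arc $(j,k)$ goes from $j$ to $k$ and $a\bmod b\in\{0,\dots,b-1\}$ is the remainder; these $m$ pairs are pairwise distinct pairs of distinct vertices (equivalently, $\mathbb G(n,0)$ is empty and $\mathbb G(n,m)$ is obtained from $\mathbb G(n,m-1)$ by adding the arc $(\lceil \frac{m}{n-1}\rceil, n-((m-1)\bmod n))$). The (in-degree) Laplacian of a directed graph is $L=D-A$, $D$ the diagonal matrix of in-degrees, $A_{ij}=1$ if $(j,i)$ is an arc and $0$ otherwise. The algebraic connectivity is the second smallest real part among the $n$ eigenvalues of $L$ counted with algebraic multiplicity. *)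

theory Defs
  imports "Jordan_Normal_Form.Char_Poly" "HOL-Computational_Algebra.Fundamental_Theorem_Algebra"
    "HOL-Library.Multiset"
begin

text \<open>Arc set of the digraph G(n,m) on vertex set {1..n}; an arc (j,k) goes from j to k.\<close>
definition G_arcs :: "nat \<Rightarrow> nat \<Rightarrow> (nat \<times> nat) set" where
  "G_arcs n m = (\<lambda>i. (nat \<lceil>real i / real (n - 1)\<rceil>, n - ((i - 1) mod n))) ` {1..m}"

definition in_degree :: "(nat \<times> nat) set \<Rightarrow> nat \<Rightarrow> nat" where
  "in_degree E v = card {u. (u, v) \<in> E}"

text \<open>In-degree Laplacian L = D - A (A_ij = 1 iff (j,i) is an arc), as an n x n complex
  matrix; row/column index r (0-based) corresponds to vertex r+1.\<close>
definition laplacian :: "nat \<Rightarrow> (nat \<times> nat) set \<Rightarrow> complex mat" where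
  "laplacian n E = mat n n (\<lambda>(r, c).
      (if r = c then of_nat (in_degree E (r + 1)) else 0)
      - (if (c + 1, r + 1) \<in> E then 1 else 0))"

definition eigenvalues_mset :: "complex mat \<Rightarrow> complex multiset" where
  "eigenvalues_mset A = proots (char_poly A)"

definition algebraic_connectivity :: "nat \<Rightarrow> (nat \<times> nat) set \<Rightarrow> real" where
  "algebraic_connectivity n E =
     sorted_list_of_multiset (image_mset Re (eigenvalues_mset (laplacian n E))) ! 1"

end

(*
  Let q = m div (n - 1). In G(n,m) each of the (0-based) vertices 0, ..., q - 1 has an arc to every
  other vertex, vertex q has arcs to fewer than n - 1 others, and the remaining vertices have no
  out-arcs. The rows of the Laplacian L sum to zero, so replacing the basis vector e_p
  (p = min q (n - 1)) by the all-ones vector makes column p vanish; in that basis L becomes lower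
  triangular with diagonal entry 0 at p and q + [q -> i] at every i different from p. Since vertex q
  misses at least one target, the second smallest eigenvalue is q.
*)
theory Submission
  imports Defs "HOL-Number_Theory.Cong"
begin

lemma sorted_list_of_multiset_add_mset_nth_1:
  fixes a x :: "'a :: linorder"
  assumes "x \<in># N" and "\<And>y. y \<in># N \<Longrightarrow> x \<le> y" and "a \<le> x"
  shows "sorted_list_of_multiset (add_mset a N) ! 1 = x"
proof -
  have "x \<in> set (sorted_list_of_multiset N)"
    using assms(1) by simp
  then obtain b ys where bys: "sorted_list_of_multiset N = b # ys"
    by (cases "sorted_list_of_multiset N") auto
  have "b \<le> x"
    using bys assms(1) sorted_sorted_list_of_multiset[of N] by (metis set_ConsD set_sorted_list_of_multiset sorted_simps(2) order.refl)
  moreover have "x \<le> b"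
    using bys assms(2) by (metis list.set_intros(1) set_sorted_list_of_multiset)
  ultimately show ?thesis
    using bys assms(3) by simp
qed

lemma proots_prod_list_linear_factors:
  "proots (\<Prod>a\<leftarrow>xs. [:- a, 1:]) = mset (xs :: 'a :: idom list)"
proof (induction xs)
  case (Cons a xs)
  have "(\<Prod>a\<leftarrow>xs. [:- a, 1:]) \<noteq> 0"
    by (auto simp: prod_list_zero_iff)
  then show ?case
    using Cons.IH proots_mult[of "[:- a, 1:]" "\<Prod>a\<leftarrow>xs. [:- a, 1:]"] by simp
qed simp

lemma eigenvalues_mset_lower_triangular:
  assumes "A \<in> carrier_mat n n" and "\<And>i j. i < j \<Longrightarrow> j < n \<Longrightarrow> A $$ (i, j) = 0"
  shows "eigenvalues_mset A = image_mset (\<lambda>i. A $$ (i, i)) (mset_set {..<n})"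
proof -
  have "upper_triangular (transpose_mat A)"
    using assms by (auto simp: upper_triangular_def)
  then have "char_poly A = (\<Prod>a\<leftarrow>diag_mat (transpose_mat A). [:- a, 1:])"
    using assms(1) char_poly_upper_triangular[of "transpose_mat A" n] by simp
  moreover have "diag_mat (transpose_mat A) = map (\<lambda>i. A $$ (i, i)) [0..<n]"
    using assms(1) by (auto simp: diag_mat_def)
  ultimately show ?thesis
    by (simp add: eigenvalues_mset_def proots_prod_list_linear_factors mset_upt atLeast0LessThan
        flip: map_map)
qed

definition ones_column_mat :: "nat \<Rightarrow> nat \<Rightarrow> 'a :: comm_ring_1 mat" where
  "ones_column_mat n p = mat n n (\<lambda>(i, j). if i = j \<or> j = p then 1 else 0)"

definition ones_column_mat_inv :: "nat \<Rightarrow> nat \<Rightarrow> 'a :: comm_ring_1 mat" where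
  "ones_column_mat_inv n p = mat n n (\<lambda>(i, j). if i = j then 1 else if j = p then -1 else 0)"

lemma ones_column_mat_carrier [simp]:
  "ones_column_mat n p \<in> carrier_mat n n" "ones_column_mat_inv n p \<in> carrier_mat n n"
  by (simp_all add: ones_column_mat_def ones_column_mat_inv_def)

lemma mult_ones_column_mat_index:
  fixes M :: "'a :: comm_ring_1 mat"
  assumes "M \<in> carrier_mat n n" and "i < n" and "j < n"
  shows "(M * ones_column_mat n p) $$ (i, j) = (if j = p then (\<Sum>k<n. M $$ (i, k)) else M $$ (i, j))"
  using assms
  by (auto simp: ones_column_mat_def scalar_prod_def atLeast0LessThan if_distrib[of "(*) _"] cong: if_cong)

lemma ones_column_mat_inv_mult_index:
  fixes M :: "'a :: comm_ring_1 mat"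
  assumes "M \<in> carrier_mat n n" and "p < n" and "i < n" and "j < n"
  shows "(ones_column_mat_inv n p * M) $$ (i, j) = M $$ (i, j) - (if i = p then 0 else M $$ (p, j))"
proof -
  have "(ones_column_mat_inv n p * M) $$ (i, j)
      = (\<Sum>k<n. (if k = i then M $$ (k, j) else 0) - (if k = p \<and> i \<noteq> p then M $$ (k, j) else 0))"
    using assms by (auto simp: ones_column_mat_inv_def scalar_prod_def atLeast0LessThan intro!: sum.cong)
  also have "\<dots> = M $$ (i, j) - (if i = p then 0 else M $$ (p, j))"
    using assms by (simp add: sum_subtractf)
  finally show ?thesis .
qed

lemma ones_column_mat_mult_index:
  fixes M :: "'a :: comm_ring_1 mat"
  assumes "M \<in> carrier_mat n n" and "p < n" and "i < n" and "j < n"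
  shows "(ones_column_mat n p * M) $$ (i, j) = M $$ (i, j) + (if i = p then 0 else M $$ (p, j))"
proof -
  have "(ones_column_mat n p * M) $$ (i, j)
      = (\<Sum>k<n. (if k = i then M $$ (k, j) else 0) + (if k = p \<and> i \<noteq> p then M $$ (k, j) else 0))"
    using assms by (auto simp: ones_column_mat_def scalar_prod_def atLeast0LessThan intro!: sum.cong)
  also have "\<dots> = M $$ (i, j) + (if i = p then 0 else M $$ (p, j))"
    using assms by (simp add: sum.distrib)
  finally show ?thesis .
qed

lemma ones_column_mat_inverse:
  assumes "p < n"
  shows "ones_column_mat n p * ones_column_mat_inv n p = (1\<^sub>m n :: 'a :: comm_ring_1 mat)"
    and "ones_column_mat_inv n p * ones_column_mat n p = (1\<^sub>m n :: 'a mat)"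
proof -
  show "ones_column_mat n p * ones_column_mat_inv n p = (1\<^sub>m n :: 'a mat)"
    by (rule eq_matI)
      (simp_all add: assms ones_column_mat_mult_index[OF ones_column_mat_carrier(2)],
       auto simp: assms ones_column_mat_def ones_column_mat_inv_def)
  show "ones_column_mat_inv n p * ones_column_mat n p = (1\<^sub>m n :: 'a mat)"
    by (rule eq_matI)
      (simp_all add: assms ones_column_mat_inv_mult_index[OF ones_column_mat_carrier(1)],
       auto simp: assms ones_column_mat_def ones_column_mat_inv_def)
qed

lemma similar_mat_ones_column_conj:
  fixes M :: "'a :: comm_ring_1 mat"
  assumes M: "M \<in> carrier_mat n n" and "p < n"
  shows "similar_mat M (ones_column_mat_inv n p * M * ones_column_mat n p)"
proof -
  let ?P = "ones_column_mat n p :: 'a mat" and ?Q = "ones_column_mat_inv n p :: 'a mat"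
  have P: "?P \<in> carrier_mat n n" and Q: "?Q \<in> carrier_mat n n"
    by simp_all
  have PQ: "?P * ?Q = 1\<^sub>m n" and QP: "?Q * ?P = 1\<^sub>m n"
    using ones_column_mat_inverse[OF \<open>p < n\<close>] by simp_all
  have QM: "?Q * M \<in> carrier_mat n n"
    using Q M by (rule mult_carrier_mat)
  have "?P * (?Q * M * ?P) * ?Q = ?P * (?Q * M * (?P * ?Q))"
    using P Q QM by (simp add: assoc_mult_mat[OF P _ Q] assoc_mult_mat[OF QM P Q])
  also have "\<dots> = ?P * (?Q * M)"
    using PQ right_mult_one_mat[OF QM] by simp
  also have "\<dots> = M"
    using PQ left_mult_one_mat[OF M] by (simp add: assoc_mult_mat[OF P Q M, symmetric])
  finally have "M = ?P * (?Q * M * ?P) * ?Q"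
    by (rule sym)
  with PQ QP show ?thesis
    by (rule similar_matI[rotated]) (use P Q M QM in \<open>auto intro: mult_carrier_mat\<close>)
qed

lemma ones_column_conj_index:
  fixes M :: "'a :: comm_ring_1 mat"
  assumes "M \<in> carrier_mat n n" and "p < n" and "i < n" and "j < n"
    and row_sums: "\<And>i. i < n \<Longrightarrow> (\<Sum>k<n. M $$ (i, k)) = 0"
  shows "(ones_column_mat_inv n p * M * ones_column_mat n p) $$ (i, j)
    = (if j = p then 0 else M $$ (i, j) - (if i = p then 0 else M $$ (p, j)))"
proof -
  have "ones_column_mat_inv n p * M \<in> carrier_mat n n"
    using ones_column_mat_carrier(2) assms(1) by (rule mult_carrier_mat)
  then show ?thesis
    using assms row_sums[of p]
    by (cases "i = p") (simp_all add: mult_ones_column_mat_index ones_column_mat_inv_mult_index sum_subtractf)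
qed

lemma laplacian_carrier [simp]: "laplacian n E \<in> carrier_mat n n"
  by (simp add: laplacian_def)

lemma laplacian_row_sum:
  assumes "E \<subseteq> {1..n} \<times> {1..n}" and "i < n"
  shows "(\<Sum>j<n. laplacian n E $$ (i, j)) = 0"
proof -
  have "{u. (u, Suc i) \<in> E} = Suc ` {j. j < n \<and> (Suc j, Suc i) \<in> E}"
    using assms(1) by (force simp: image_iff Suc_le_eq gr0_conv_Suc)
  then have "in_degree E (Suc i) = card {j. j < n \<and> (Suc j, Suc i) \<in> E}"
    by (simp add: in_degree_def card_image)
  moreover have "(\<Sum>j<n. laplacian n E $$ (i, j))
      = of_nat (in_degree E (Suc i)) - (\<Sum>j | j < n \<and> (Suc j, Suc i) \<in> E. 1)"
    using assms(2) by (simp add: laplacian_def sum_subtractf sum.If_cases lessThan_def Collect_conj_eq)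
  ultimately show ?thesis
    by simp
qed

lemma nat_ceiling_divide_eq:
  assumes "0 < d" and "0 < i"
  shows "nat \<lceil>real i / real d\<rceil> = Suc ((i - 1) div d)"
proof -
  define a where "a = (i - 1) div d"
  have "i - 1 = d * a + (i - 1) mod d" and "(i - 1) mod d < d"
    using assms(1) by (simp_all add: a_def)
  then have "d * a < i" and "i \<le> d * Suc a"
    using assms(2) by simp_all
  then have "real d * real a < real i" and "real i \<le> real d * real (Suc a)"
    by (simp_all only: of_nat_mult [symmetric] of_nat_less_iff of_nat_le_iff)
  then have "\<lceil>real i / real d\<rceil> = int (Suc a)"
    using assms(1) by (intro ceiling_unique) (simp_all add: field_simps)
  then show ?thesis
    by (simp add: a_def)
qed

lemma G_arcs_eq:
  assumes "2 \<le> n"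
  shows "G_arcs n m = (\<lambda>k. (Suc (k div (n - 1)), n - k mod n)) ` {..<m}"
proof -
  have ceiling: "nat \<lceil>real (Suc k) / real (n - 1)\<rceil> = Suc (k div (n - 1))" for k
    using assms nat_ceiling_divide_eq[of "n - 1" "Suc k"] by simp
  have "G_arcs n m = (\<lambda>k. (nat \<lceil>real (Suc k) / real (n - 1)\<rceil>, n - k mod n)) ` {..<m}"
    unfolding G_arcs_def image_Suc_lessThan [symmetric] image_image by simp
  then show ?thesis
    unfolding ceiling .
qed

lemma G_arcs_subset:
  assumes "2 \<le> n" and "m \<le> n * (n - 1)"
  shows "G_arcs n m \<subseteq> {1..n} \<times> {1..n}"
proof -
  have "k div (n - 1) < n" if "k < m" for k
    using that assms by (simp add: less_mult_imp_div_less)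
  moreover have "k mod n < n" for k
    using assms(1) by simp
  ultimately show ?thesis
    using assms(1) by (force simp: G_arcs_eq Suc_le_eq)
qed

lemma mod_offset_less_iff:
  fixes c n r :: nat
  assumes "c < n" and "r < n"
  shows "(n - 1 - r + c) mod n < n - 1 \<longleftrightarrow> r \<noteq> c"
proof
  assume "(n - 1 - r + c) mod n < n - 1"
  moreover have "(n - 1 - c + c) mod n = n - 1"
    using assms(1) by simp
  ultimately show "r \<noteq> c"
    by auto
next
  assume "r \<noteq> c"
  have "(n - 1 - r + c) mod n \<noteq> n - 1"
  proof
    assume "(n - 1 - r + c) mod n = n - 1"
    then have "[(n - 1 - r) + c = (n - 1 - r) + r] (mod n)"
      using assms by (simp add: cong_def)
    then have "[c = r] (mod n)"
      by (rule iffD1[OF cong_add_lcancel_nat])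
    then have "c = r"
      using assms by (rule cong_less_modulus_unique_nat)
    with \<open>r \<noteq> c\<close> show False
      by simp
  qed
  moreover have "(n - 1 - r + c) mod n < n"
    using assms by simp
  ultimately show "(n - 1 - r + c) mod n < n - 1"
    by linarith
qed

text \<open>In 0-based numbering the out-arcs of vertex c go to c - 1, c - 2, \<dots>, c - (n - 1) modulo n,
  in this order; the arc to r is the one at position (n - 1 - r + c) mod n.\<close>
lemma G_arcs_Suc_iff:
  assumes "2 \<le> n" and "c < n" and "r < n"
  shows "(Suc c, Suc r) \<in> G_arcs n m \<longleftrightarrow> r \<noteq> c \<and> c * (n - 1) + (n - 1 - r + c) mod n < m"
proof -
  have source: "(\<exists>k<m. c = k div (n - 1) \<and> P k) \<longleftrightarrow> (\<exists>s<n - 1. c * (n - 1) + s < m \<and> P (c * (n - 1) + s))"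
    for P
  proof
    assume "\<exists>k<m. c = k div (n - 1) \<and> P k"
    then obtain k where "k < m" "c = k div (n - 1)" "P k"
      by blast
    moreover have "k = c * (n - 1) + k mod (n - 1)" and "k mod (n - 1) < n - 1"
      using assms(1) \<open>c = k div (n - 1)\<close> div_mult_mod_eq[of k "n - 1"] by simp_all
    ultimately show "\<exists>s<n - 1. c * (n - 1) + s < m \<and> P (c * (n - 1) + s)"
      by metis
  qed (use assms(1) in auto)
  have target: "(c * (n - 1) + s) mod n = n - 1 - r \<longleftrightarrow> s = (n - 1 - r + c) mod n" if "s < n - 1" for s
  proof -
    have "c * (n - 1) + s + c = s + c * n"
      using assms(1) by (cases n) (simp_all add: algebra_simps)
    then have shift: "((c * (n - 1) + s) mod n + c) mod n = s"
      using that by (simp only: mod_add_left_eq) simp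
    show ?thesis
    proof
      assume "s = (n - 1 - r + c) mod n"
      then have "[(c * (n - 1) + s) mod n + c = n - 1 - r + c] (mod n)"
        using shift by (simp add: cong_def)
      then have "[(c * (n - 1) + s) mod n = n - 1 - r] (mod n)"
        by (rule iffD1[OF cong_add_rcancel_nat])
      then show "(c * (n - 1) + s) mod n = n - 1 - r"
        by (rule cong_less_modulus_unique_nat) (use assms(1) in simp_all)
    qed (use shift in simp)
  qed
  have "Suc r = n - k mod n \<longleftrightarrow> k mod n = n - 1 - r" for k
    using assms(1,3) mod_less_divisor[of n k] by linarith
  then have "(Suc c, Suc r) \<in> G_arcs n m \<longleftrightarrow> (\<exists>k<m. c = k div (n - 1) \<and> k mod n = n - 1 - r)"
    unfolding G_arcs_eq[OF assms(1)] by auto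
  also have "\<dots> \<longleftrightarrow> (\<exists>s<n - 1. c * (n - 1) + s < m \<and> s = (n - 1 - r + c) mod n)"
    unfolding source using target by auto
  also have "\<dots> \<longleftrightarrow> r \<noteq> c \<and> c * (n - 1) + (n - 1 - r + c) mod n < m"
    using mod_offset_less_iff[OF assms(2,3)] by auto
  finally show ?thesis .
qed

context
  fixes n m q p :: nat
  assumes n_ge_2: "2 \<le> n" and m_le: "m \<le> n * (n - 1)"
    and q_def: "q = m div (n - 1)" and p_def: "p = min q (n - 1)"
begin

lemma q_le_n: "q \<le> n"
proof -
  have "q \<le> n * (n - 1) div (n - 1)"
    unfolding q_def using m_le by (rule div_le_mono)
  then show ?thesis
    using n_ge_2 by simp
qed

lemma p_less_n: "p < n"
  using n_ge_2 unfolding p_def by simp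

lemma m_less_Suc_q_mult: "m < Suc q * (n - 1)"
proof -
  have "m = q * (n - 1) + m mod (n - 1)"
    unfolding q_def by (rule div_mult_mod_eq[symmetric])
  moreover have "m mod (n - 1) < n - 1"
    using n_ge_2 by simp
  ultimately show ?thesis
    unfolding mult_Suc by linarith
qed

lemma G_arcs_Suc_Suc_iff:
  assumes "r < n"
  shows "(Suc c, Suc r) \<in> G_arcs n m \<longleftrightarrow> c < q \<and> c \<noteq> r \<or> c = q \<and> (Suc q, Suc r) \<in> G_arcs n m"
proof (cases "c < n")
  case False
  then have "(Suc c, Suc r) \<notin> G_arcs n m"
    using G_arcs_subset[OF n_ge_2 m_le] by auto
  moreover have "\<not> c < q"
    using False q_le_n by simp
  ultimately show ?thesis
    by blast
next
  case True
  have arc_iff: "(Suc c, Suc r) \<in> G_arcs n m \<longleftrightarrow> r \<noteq> c \<and> c * (n - 1) + (n - 1 - r + c) mod n < m"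
    by (rule G_arcs_Suc_iff[OF n_ge_2 True assms])
  consider "c < q" | "c = q" | "q < c"
    by linarith
  then show ?thesis
  proof cases
    case 1
    have "c * (n - 1) + (n - 1 - r + c) mod n < m" if "r \<noteq> c"
    proof -
      have "(n - 1 - r + c) mod n < n - 1"
        using mod_offset_less_iff[OF True assms] that by simp
      moreover have "Suc c * (n - 1) \<le> q * (n - 1)"
        using 1 by (intro mult_right_mono) simp_all
      moreover have "q * (n - 1) \<le> m"
        unfolding q_def by (rule div_times_less_eq_dividend)
      ultimately show ?thesis
        unfolding mult_Suc by linarith
    qed
    then show ?thesis
      using 1 arc_iff by blast
  next
    case 3
    have "Suc q * (n - 1) \<le> c * (n - 1)"
      using 3 by (intro mult_right_mono) simp_all
    then have "\<not> c * (n - 1) + (n - 1 - r + c) mod n < m"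
      using m_less_Suc_q_mult by linarith
    then show ?thesis
      using 3 arc_iff by auto
  qed simp
qed

lemma in_degree_G_arcs:
  assumes "r < n"
  shows "in_degree (G_arcs n m) (Suc r) + of_bool (r < q) = q + of_bool ((Suc q, Suc r) \<in> G_arcs n m)"
proof -
  let ?S = "{c. c = q \<and> (Suc q, Suc r) \<in> G_arcs n m}"
  have "{u. (u, Suc r) \<in> G_arcs n m} = Suc ` {c. (Suc c, Suc r) \<in> G_arcs n m}"
  proof -
    have "u \<in> Suc ` {c. (Suc c, Suc r) \<in> G_arcs n m}" if "(u, Suc r) \<in> G_arcs n m" for u
    proof (rule image_eqI)
      show "u = Suc (u - 1)"
        using that G_arcs_subset[OF n_ge_2 m_le] by auto
      then show "u - 1 \<in> {c. (Suc c, Suc r) \<in> G_arcs n m}"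
        using that by simp
    qed
    then show ?thesis
      by auto
  qed
  also have "{c. (Suc c, Suc r) \<in> G_arcs n m} = ({..<q} - {r}) \<union> ?S"
    using G_arcs_Suc_Suc_iff[OF assms] by blast
  finally have "in_degree (G_arcs n m) (Suc r) = card (({..<q} - {r}) \<union> ?S)"
    by (simp add: in_degree_def card_image)
  also have "\<dots> = card ({..<q} - {r}) + of_bool ((Suc q, Suc r) \<in> G_arcs n m)"
    by (subst card_Un_disjoint) auto
  finally show ?thesis
    using q_le_n by (simp add: card_Diff_singleton_if)
qed

lemma G_arcs_off_pivot_iff:
  assumes "j < n" and "i < n" and "j \<noteq> p"
  shows "(Suc j, Suc i) \<in> G_arcs n m \<longleftrightarrow> j < q \<and> j \<noteq> i"
proof -
  have "j \<noteq> q"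
    using assms(1,3) unfolding p_def by auto
  then show ?thesis
    using G_arcs_Suc_Suc_iff[OF assms(2), of j] by simp
qed

lemma exists_non_out_neighbour: "\<exists>j<n. j \<noteq> p \<and> (Suc q, Suc j) \<notin> G_arcs n m"
proof (cases "q < n")
  case True
  define j where "j = (if Suc q < n then Suc q else 0)"
  have "j < n" and "j \<noteq> q"
    using True n_ge_2 by (auto simp: j_def)
  have "(n - 1 - j + q) mod n = n - 2"
  proof (cases "Suc q < n")
    case False
    then have "n - 1 - j + q = (n - 2) + n"
      using True n_ge_2 by (simp add: j_def)
    then show ?thesis
      using n_ge_2 by (simp only: mod_add_self2) simp
  qed (simp add: j_def)
  moreover have "m \<le> q * (n - 1) + (n - 2)"
    using m_less_Suc_q_mult n_ge_2 by simp
  ultimately have "(Suc q, Suc j) \<notin> G_arcs n m"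
    using G_arcs_Suc_iff[OF n_ge_2 True \<open>j < n\<close>] by simp
  moreover have "p = q"
    using True unfolding p_def by simp
  ultimately show ?thesis
    using \<open>j < n\<close> \<open>j \<noteq> q\<close> by blast
next
  case False
  then have "(Suc q, Suc 0) \<notin> G_arcs n m"
    using G_arcs_subset[OF n_ge_2 m_le] by auto
  moreover have "p \<noteq> 0"
    using n_ge_2 False q_le_n unfolding p_def by simp
  ultimately show ?thesis
    using n_ge_2 by (intro exI[of _ 0]) simp
qed

lemma G_laplacian_conj_index:
  assumes "i < n" and "j < n"
  shows "(ones_column_mat_inv n p * laplacian n (G_arcs n m) * ones_column_mat n p) $$ (i, j) =
    (if j = p then 0
     else if i = p then - of_bool (j < q)
     else if i = j then of_nat q + of_bool ((Suc q, Suc i) \<in> G_arcs n m) else 0)"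
proof -
  let ?L = "laplacian n (G_arcs n m)"
  have L: "?L $$ (k, j) = (if k = j then of_nat (in_degree (G_arcs n m) (Suc k)) else 0)
      - of_bool (j < q \<and> j \<noteq> k)" if "k < n" and "j \<noteq> p" for k
    using that assms(2) G_arcs_off_pivot_iff[OF assms(2) that(1) that(2)]
    by (simp add: laplacian_def)
  have "(ones_column_mat_inv n p * ?L * ones_column_mat n p) $$ (i, j)
      = (if j = p then 0 else ?L $$ (i, j) - (if i = p then 0 else ?L $$ (p, j)))"
    using laplacian_row_sum[OF G_arcs_subset[OF n_ge_2 m_le]]
    by (intro ones_column_conj_index[OF laplacian_carrier p_less_n assms])
  also have "\<dots> = (if j = p then 0
     else if i = p then - of_bool (j < q)
     else if i = j then of_nat q + of_bool ((Suc q, Suc i) \<in> G_arcs n m) else 0)"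
  proof (cases "j = p")
    case False
    have "of_nat (in_degree (G_arcs n m) (Suc j)) + of_bool (j < q)
        = (of_nat q + of_bool ((Suc q, Suc j) \<in> G_arcs n m) :: complex)"
      using in_degree_G_arcs[OF assms(2)] by (metis of_nat_add of_nat_of_bool)
    then show ?thesis
      using False assms L[OF assms(1) False] L[OF p_less_n False] by auto
  qed simp
  finally show ?thesis .
qed

lemma eigenvalues_mset_G_laplacian:
  "eigenvalues_mset (laplacian n (G_arcs n m)) =
    add_mset 0 (image_mset (\<lambda>i. of_nat q + of_bool ((Suc q, Suc i) \<in> G_arcs n m)) (mset_set ({..<n} - {p})))"
proof -
  let ?B = "ones_column_mat_inv n p * laplacian n (G_arcs n m) * ones_column_mat n p :: complex mat"
  have "char_poly (laplacian n (G_arcs n m)) = char_poly ?B"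
    by (intro char_poly_similar similar_mat_ones_column_conj laplacian_carrier p_less_n)
  then have "eigenvalues_mset (laplacian n (G_arcs n m)) = eigenvalues_mset ?B"
    by (simp add: eigenvalues_mset_def)
  also have "\<dots> = image_mset (\<lambda>i. ?B $$ (i, i)) (mset_set {..<n})"
  proof (rule eigenvalues_mset_lower_triangular)
    show "?B \<in> carrier_mat n n"
      by (intro mult_carrier_mat[where n = n] laplacian_carrier ones_column_mat_carrier)
    show "?B $$ (i, j) = 0" if "i < j" and "j < n" for i j
    proof -
      have "\<not> (p < j \<and> j < q)"
        using that(2) unfolding p_def by auto
      then show ?thesis
        using that p_less_n by (simp add: G_laplacian_conj_index)
    qed
  qed
  also have "mset_set {..<n} = add_mset p (mset_set ({..<n} - {p}))"
    using p_less_n by (simp add: mset_set.remove)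
  finally show ?thesis
    using p_less_n by (auto simp: G_laplacian_conj_index intro!: image_mset_cong)
qed

end

theorem theorem4:
  fixes n m :: nat
  assumes "n \<ge> 2" and "m \<le> n * (n - 1)"
  shows "algebraic_connectivity n (G_arcs n m) = of_int \<lfloor>real m / real (n - 1)\<rfloor>"
proof -
  define q where "q = m div (n - 1)"
  define p where "p = min q (n - 1)"
  note hyps = assms q_def p_def
  define N where "N = image_mset (\<lambda>i. real q + of_bool ((Suc q, Suc i) \<in> G_arcs n m)) (mset_set ({..<n} - {p}))"
  have "Re (of_nat q + of_bool b) = real q + of_bool b" for b
    by (cases b) simp_all
  then have spectrum: "image_mset Re (eigenvalues_mset (laplacian n (G_arcs n m))) = add_mset 0 N"
    by (simp add: eigenvalues_mset_G_laplacian[OF hyps] N_def multiset.map_comp o_def)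
  obtain j where "j < n" and "j \<noteq> p" and "(Suc q, Suc j) \<notin> G_arcs n m"
    using exists_non_out_neighbour[OF hyps] by blast
  then have "real q \<in># N"
    unfolding N_def by (auto intro!: image_eqI[of _ _ j])
  moreover have "real q \<le> x" if "x \<in># N" for x
    using that unfolding N_def by auto
  ultimately have "algebraic_connectivity n (G_arcs n m) = real q"
    unfolding algebraic_connectivity_def spectrum by (intro sorted_list_of_multiset_add_mset_nth_1) simp_all
  also have "real q = of_int \<lfloor>real m / real (n - 1)\<rfloor>"
    unfolding q_def by (simp add: floor_divide_of_nat_eq)
  finally show ?thesis .
qed

end
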